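(* Under the assumptions below, and assuming $\mu$ is sufficiently large, the data $(X_i,U_i)$ are informative for the stabilizability of $A_C$ if and only if, for every $i\in\{1,\dots,N\}$, there exists a right inverse $X_i^{+}$ of $X_i$ (i.e. $X_iX_i^{+}=I$) such that $(X_i\mathcal{D}_{11}-E_iV)X_i^{+}$ is stable (Hurwitz).
   Context: Leader–follower multi-agent system with $N$ followers. Follower $i$: $\dot x_i=A_ix_i+B_iu_i+E_iv$, $e_i=C_ix_i+D_iu_i+F_iv$, with $x_i\in\mathbb{R}^{n_i}$, $u_i\in\mathbb{R}^{m_i}$, $e_i\in\mathbb{R}^{p}$; exosystem $\dot v=Sv$, $v\in\mathbb{R}^q$. The matrices $A_i,B_i,C_i,D_i$ are unknown; $E_i,F_i,S$ are known. Distributed controller: $u_i=K_{1i}x_i+K_{2i}\eta_i$, $\dot\eta_i=S\eta_i+\mu[\sum_j a_{ij}(\eta_j-\eta_i)+a_{i0}(v-\eta_i)]$. The Laplacian of the graph (leader node 0 plus followers) is $\mathcal{L}=\begin{bmatrix}0&0\\-[a_{10},\dots,a_{N0}]^T&H\end{bmatrix}$. The closed-loop matrix is $A_C=\begin{bmatrix}A+BK_1&BK_2\\0&(I_N\otimes S)-\mu(H\otimes I_q)\end{bmatrix}$ with $A=\mathrm{blockdiag}(A_i)$, $B=\mathrm{blockdiag}(B_i)$, $K_1=\mathrm{blockdiag}(K_{1i})$, $K_2=\mathrm{blockdiag}(K_{2i})$. Data: the signals on a time interval are expanded in an orthogonal polynomial basis (e.g. Chebyshev) truncated at degree $N$; $X_i\in\mathbb{R}^{n_i\times(N+1)}$,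 $U_i$, $V$ collect the first $N+1$ coefficient vectors of $x_i,u_i,v$, and $\mathcal{D}_{11}\in\mathbb{R}^{(N+1)\times(N+1)}$ is the leading block of the basis differentiation matrix. Exact data: $X_i\mathcal{D}_{11}=A_iX_i+B_iU_i+E_iV$. The data are informative for the stabilizability of $A_C$ if every $(A,B)$ consistent with the data (i.e. $X\mathcal{D}_{11}=AX+BU+E\bar V$ with stacked data, $\bar V=1_N\otimes V$) admits $K_1,K_2,\mu$ making $A_C$ Hurwitz. Assumptions: $S$ has no eigenvalues with negative real part; the directed weighted graph is unknown but contains a directed spanning tree rooted at the leader; there exist $\varepsilon_1,\varepsilon_2>0$ with $\varepsilon_1\le|\mathcal{L}_{ij}|\le\varepsilon_2$ for all nonzero entries of $\mathcal{L}$. *)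

theory Defs
  imports "Jordan_Normal_Form.Matrix" "Jordan_Normal_Form.Char_Poly"
begin

definition hurwitz :: "real mat \<Rightarrow> bool" where
  "hurwitz M \<longleftrightarrow> dim_row M = dim_col M \<and>
     (\<forall>z. eigenvalue (map_mat complex_of_real M) z \<longrightarrow> Re z < 0)"

definition kron :: "'a::times mat \<Rightarrow> 'a mat \<Rightarrow> 'a mat" where
  "kron P Q = mat (dim_row P * dim_row Q) (dim_col P * dim_col Q)
     (\<lambda>(i,j). P $$ (i div dim_row Q, j div dim_col Q) * Q $$ (i mod dim_row Q, j mod dim_col Q))"

definition bdiag :: "(nat \<Rightarrow> 'a::zero mat) \<Rightarrow> nat \<Rightarrow> 'a mat" where
  "bdiag F N = diag_block_mat (map F [1..<Suc N])"

text \<open>Graph on nodes 0 (leader), 1..N (followers); a i j is the weight of the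
  edge from j to i (i receives information from j).  Laplacian of the graph.\<close>
definition laplacian :: "nat \<Rightarrow> (nat \<Rightarrow> nat \<Rightarrow> real) \<Rightarrow> real mat" where
  "laplacian N a = mat (Suc N) (Suc N)
     (\<lambda>(i,j). if i = j then (\<Sum>k\<in>{0..N} - {i}. a i k) else - a i j)"

definition H_of :: "nat \<Rightarrow> (nat \<Rightarrow> nat \<Rightarrow> real) \<Rightarrow> real mat" where
  "H_of N a = mat N N (\<lambda>(i,j). laplacian N a $$ (Suc i, Suc j))"

definition admissible_graph :: "nat \<Rightarrow> (nat \<Rightarrow> nat \<Rightarrow> real) \<Rightarrow> real \<Rightarrow> real \<Rightarrow> bool" where
  "admissible_graph N a \<epsilon>1 \<epsilon>2 \<longleftrightarrow>
     (\<forall>i\<le>N. \<forall>j\<le>N. 0 \<le> a i j) \<and> (\<forall>i\<le>N. a i i = 0) \<and> (\<forall>j\<le>N. a 0 j = 0) \<and>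
     (\<forall>i\<in>{1..N}. (0, i) \<in> {(j, k). j \<le> N \<and> k \<le> N \<and> 0 < a k j}\<^sup>*) \<and>
     (\<forall>i\<le>N. \<forall>j\<le>N. laplacian N a $$ (i,j) \<noteq> 0 \<longrightarrow>
        \<epsilon>1 \<le> \<bar>laplacian N a $$ (i,j)\<bar> \<and> \<bar>laplacian N a $$ (i,j)\<bar> \<le> \<epsilon>2)"

definition closed_loop :: "real mat \<Rightarrow> real mat \<Rightarrow> real mat \<Rightarrow> real mat \<Rightarrow> real mat \<Rightarrow> real mat \<Rightarrow> real \<Rightarrow> real mat" where
  "closed_loop A B K1 K2 S H \<mu> =
     (let Lo = kron (1\<^sub>m (dim_row H)) S - \<mu> \<cdot>\<^sub>m kron H (1\<^sub>m (dim_row S))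
      in four_block_mat (A + B * K1) (B * K2) (0\<^sub>m (dim_row Lo) (dim_col A)) Lo)"

definition consistent ::
  "nat \<Rightarrow> (nat \<Rightarrow> nat) \<Rightarrow> (nat \<Rightarrow> nat) \<Rightarrow> (nat \<Rightarrow> real mat) \<Rightarrow> (nat \<Rightarrow> real mat) \<Rightarrow>
   (nat \<Rightarrow> real mat) \<Rightarrow> real mat \<Rightarrow> real mat \<Rightarrow> (nat \<Rightarrow> real mat) \<Rightarrow> (nat \<Rightarrow> real mat) \<Rightarrow> bool" where
  "consistent N n m E X U V D Ai Bi \<longleftrightarrow>
     (\<forall>i\<in>{1..N}. Ai i \<in> carrier_mat (n i) (n i) \<and> Bi i \<in> carrier_mat (n i) (m i) \<and>
        X i * D = Ai i * X i + Bi i * U i + E i * V)"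

definition informative ::
  "nat \<Rightarrow> (nat \<Rightarrow> nat) \<Rightarrow> (nat \<Rightarrow> nat) \<Rightarrow> nat \<Rightarrow> (nat \<Rightarrow> real mat) \<Rightarrow> (nat \<Rightarrow> real mat) \<Rightarrow>
   (nat \<Rightarrow> real mat) \<Rightarrow> real mat \<Rightarrow> real mat \<Rightarrow> real mat \<Rightarrow> real mat \<Rightarrow> real \<Rightarrow> bool" where
  "informative N n m q E X U V D S H \<mu> \<longleftrightarrow>
     (\<exists>K1 K2. (\<forall>i\<in>{1..N}. K1 i \<in> carrier_mat (m i) (n i) \<and> K2 i \<in> carrier_mat (m i) q) \<and>
        (\<forall>Ai Bi. consistent N n m E X U V D Ai Bi \<longrightarrow>
           hurwitz (closed_loop (bdiag Ai N) (bdiag Bi N) (bdiag K1 N) (bdiag K2 N) S H \<mu>)))"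

end

theory Submission
  imports Defs
begin

text \<open>
  The closed-loop matrix is block upper triangular, with diagonal blocks \<open>A\<^sub>i + B\<^sub>i K\<^sub>1\<^sub>i\<close> and
  the observer matrix \<open>(I\<^sub>N \<otimes> S) - \<mu> (H \<otimes> I\<^sub>q)\<close>, so it is Hurwitz iff all of these are.

  If a gain \<open>K\<close> makes \<open>A + B K\<close> Hurwitz for every \<open>(A, B)\<close> consistent with the data, then every
  left annihilator of the stacked data \<open>[X; U]\<close> annihilates \<open>[I; K]\<close>: otherwise a rank-one
  perturbation of \<open>(A, B)\<close> that the data cannot see makes \<open>A + B K\<close> singular. By the Fredholm
  alternative \<open>K = U X\<^sup>+\<close> for a right inverse \<open>X\<^sup>+\<close> of \<open>X\<close>, and then
  \<open>A + B K = (X D - E V) X\<^sup>+\<close> for every consistent \<open>(A, B)\<close>; conversely such right inverses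
  give the gains \<open>K\<^sub>1\<^sub>i = U\<^sub>i X\<^sub>i\<^sup>+\<close>.

  A spanning tree rooted at the leader yields weights \<open>w\<^sub>p = 1 - \<beta>\<^bsup>h(p)\<^esup>\<close>, with \<open>h\<close> the hop
  distance from the leader, such that \<open>H w \<ge> \<gamma> > 0\<close> componentwise, where \<open>\<beta>\<close> and \<open>\<gamma>\<close> depend only
  on \<open>N\<close>, \<open>\<epsilon>1\<close> and \<open>\<epsilon>2\<close>. A weighted Gershgorin argument then bounds the real parts of the
  eigenvalues of the observer matrix by \<open>\<Sum>|S\<^sub>k\<^sub>l| - \<mu> \<gamma>\<close>, which is negative for all large \<open>\<mu>\<close>,
  uniformly over the admissible graphs.
\<close>

section \<open>Block-triangular and block-diagonal matrices\<close>

lemma char_matrix_four_block_mat: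
  assumes "A \<in> carrier_mat n1 n1" "B \<in> carrier_mat n1 n2" "D \<in> carrier_mat n2 n2"
  shows "char_matrix (four_block_mat A B (0\<^sub>m n2 n1) D) k
    = four_block_mat (char_matrix A k) B (0\<^sub>m n2 n1) (char_matrix D k)"
  using assms by (intro eq_matI) (auto simp: char_matrix_def)

lemma eigenvalue_four_block_mat_lower_left_zero:
  fixes A :: "'a::field mat"
  assumes A: "A \<in> carrier_mat n1 n1" and B: "B \<in> carrier_mat n1 n2" and D: "D \<in> carrier_mat n2 n2"
  shows "eigenvalue (four_block_mat A B (0\<^sub>m n2 n1) D) k \<longleftrightarrow> eigenvalue A k \<or> eigenvalue D k"
proof -
  have "det (char_matrix (four_block_mat A B (0\<^sub>m n2 n1) D) k)
      = det (char_matrix A k) * det (char_matrix D k)"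
    unfolding char_matrix_four_block_mat[OF assms]
    by (rule det_four_block_mat_lower_left_zero) (use assms in auto)
  then show ?thesis
    by (simp add: eigenvalue_det[OF A] eigenvalue_det[OF D] eigenvalue_det[OF four_block_carrier_mat[OF A D]])
qed

lemma diag_block_mat_carrier:
  "\<forall>i\<in>set is. F i \<in> carrier_mat (r i) (c i) \<Longrightarrow>
   diag_block_mat (map F is) \<in> carrier_mat (sum_list (map r is)) (sum_list (map c is))"
  by (induct "is") (auto simp: Let_def)

lemma eigenvalue_diag_block_mat:
  fixes G :: "'b \<Rightarrow> 'a::field mat"
  assumes "\<forall>i\<in>set is. G i \<in> carrier_mat (r i) (r i)"
  shows "eigenvalue (diag_block_mat (map G is)) k \<longleftrightarrow> (\<exists>i\<in>set is. eigenvalue (G i) k)"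
  using assms
proof (induction "is")
  case Nil
  have "\<not> eigenvector (0\<^sub>m 0 0 :: 'a mat) v k" for v
    unfolding eigenvector_def by (auto dest!: carrier_vecD)
  then show ?case
    unfolding eigenvalue_def by simp
next
  case (Cons j js)
  let ?B = "diag_block_mat (map G js)"
  have Gj: "G j \<in> carrier_mat (r j) (r j)"
    using Cons.prems by auto
  have B: "?B \<in> carrier_mat (sum_list (map r js)) (sum_list (map r js))"
    using diag_block_mat_carrier[of js G r r] Cons.prems by auto
  have "diag_block_mat (map G (j # js)) = four_block_mat (G j) (0\<^sub>m (r j) (sum_list (map r js)))
      (0\<^sub>m (sum_list (map r js)) (r j)) ?B"
    using Gj B by (simp add: Let_def)
  then have "eigenvalue (diag_block_mat (map G (j # js))) k \<longleftrightarrow> eigenvalue (G j) k \<or> eigenvalue ?B k"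
    using eigenvalue_four_block_mat_lower_left_zero[OF Gj _ B] by simp
  then show ?case
    using Cons by auto
qed

lemma map_mat_diag_block_mat:
  assumes "f 0 = 0"
  shows "map_mat f (diag_block_mat As) = diag_block_mat (map (map_mat f) As)"
proof (induction As)
  case (Cons A As)
  let ?B = "diag_block_mat As"
  have "map_mat f (diag_block_mat (A # As)) = four_block_mat (map_mat f A)
     (map_mat f (0\<^sub>m (dim_row A) (dim_col ?B))) (map_mat f (0\<^sub>m (dim_row ?B) (dim_col A))) (map_mat f ?B)"
    by (simp add: Let_def map_four_block_mat[of A "dim_row A" "dim_col A" _ "dim_col ?B" _ "dim_row ?B"])
  also have "\<dots> = diag_block_mat (map (map_mat f) (A # As))"
    using Cons assms by (auto simp: Let_def dim_diag_block_mat o_def intro!: cong_four_block_mat eq_matI)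
  finally show ?case .
qed (auto intro!: eq_matI)

lemma diag_block_mat_mult:
  fixes B K :: "'b \<Rightarrow> 'a::semiring_0 mat"
  assumes "\<forall>i\<in>set is. B i \<in> carrier_mat (n i) (m i) \<and> K i \<in> carrier_mat (m i) (p i)"
  shows "diag_block_mat (map B is) * diag_block_mat (map K is) = diag_block_mat (map (\<lambda>i. B i * K i) is)"
  using assms
proof (induction "is")
  case Nil
  show ?case by (auto intro!: eq_matI)
next
  case (Cons j js)
  let ?sn = "sum_list (map n js)" and ?sm = "sum_list (map m js)" and ?sp = "sum_list (map p js)"
  let ?DB = "diag_block_mat (map B js)" and ?DK = "diag_block_mat (map K js)"
  have Bj: "B j \<in> carrier_mat (n j) (m j)" and Kj: "K j \<in> carrier_mat (m j) (p j)"
    using Cons.prems by auto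
  have DB: "?DB \<in> carrier_mat ?sn ?sm" and DK: "?DK \<in> carrier_mat ?sm ?sp"
    using diag_block_mat_carrier[of js B n m] diag_block_mat_carrier[of js K m p] Cons.prems by auto
  have IH: "?DB * ?DK = diag_block_mat (map (\<lambda>i. B i * K i) js)"
    using Cons by auto
  have "diag_block_mat (map B (j # js)) * diag_block_mat (map K (j # js))
      = four_block_mat (B j) (0\<^sub>m (n j) ?sm) (0\<^sub>m ?sn (m j)) ?DB
        * four_block_mat (K j) (0\<^sub>m (m j) ?sp) (0\<^sub>m ?sm (p j)) ?DK"
    using Bj Kj DB DK by (simp add: Let_def)
  also have "\<dots> = four_block_mat (B j * K j) (0\<^sub>m (n j) ?sp) (0\<^sub>m ?sn (p j)) (?DB * ?DK)"
    by (subst mult_four_block_mat[OF Bj _ _ DB Kj _ _ DK]) (use Bj Kj DB DK in auto)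
  also have "\<dots> = diag_block_mat (map (\<lambda>i. B i * K i) (j # js))"
    using Bj Kj DB DK by (simp add: Let_def IH[symmetric])
  finally show ?case .
qed

lemma diag_block_mat_add:
  fixes A B :: "'b \<Rightarrow> 'a::monoid_add mat"
  assumes "\<forall>i\<in>set is. A i \<in> carrier_mat (n i) (m i) \<and> B i \<in> carrier_mat (n i) (m i)"
  shows "diag_block_mat (map A is) + diag_block_mat (map B is) = diag_block_mat (map (\<lambda>i. A i + B i) is)"
  using assms
proof (induction "is")
  case Nil
  show ?case by (auto intro!: eq_matI)
next
  case (Cons j js)
  let ?sn = "sum_list (map n js)" and ?sm = "sum_list (map m js)"
  let ?DA = "diag_block_mat (map A js)" and ?DB = "diag_block_mat (map B js)"
  have Aj: "A j \<in> carrier_mat (n j) (m j)" and Bj: "B j \<in> carrier_mat (n j) (m j)"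
    using Cons.prems by auto
  have DA: "?DA \<in> carrier_mat ?sn ?sm" and DB: "?DB \<in> carrier_mat ?sn ?sm"
    using diag_block_mat_carrier[of js A n m] diag_block_mat_carrier[of js B n m] Cons.prems by auto
  have IH: "?DA + ?DB = diag_block_mat (map (\<lambda>i. A i + B i) js)"
    using Cons by auto
  have "diag_block_mat (map A (j # js)) + diag_block_mat (map B (j # js))
      = four_block_mat (A j) (0\<^sub>m (n j) ?sm) (0\<^sub>m ?sn (m j)) ?DA
        + four_block_mat (B j) (0\<^sub>m (n j) ?sm) (0\<^sub>m ?sn (m j)) ?DB"
    using Aj Bj DA DB by (simp add: Let_def)
  also have "\<dots> = four_block_mat (A j + B j) (0\<^sub>m (n j) ?sm + 0\<^sub>m (n j) ?sm)
      (0\<^sub>m ?sn (m j) + 0\<^sub>m ?sn (m j)) (?DA + ?DB)"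
    by (rule add_four_block_mat[OF Aj _ _ DA Bj _ _ DB]) auto
  also have "\<dots> = four_block_mat (A j + B j) (0\<^sub>m (n j) ?sm) (0\<^sub>m ?sn (m j)) (?DA + ?DB)"
    by simp
  also have "\<dots> = diag_block_mat (map (\<lambda>i. A i + B i) (j # js))"
    using Aj Bj DA DB by (simp add: Let_def IH[symmetric])
  finally show ?case .
qed

lemma hurwitz_four_block_mat_lower_left_zero:
  assumes A: "A \<in> carrier_mat n1 n1" and B: "B \<in> carrier_mat n1 n2" and D: "D \<in> carrier_mat n2 n2"
  shows "hurwitz (four_block_mat A B (0\<^sub>m n2 n1) D) \<longleftrightarrow> hurwitz A \<and> hurwitz D"
proof -
  let ?c = "map_mat complex_of_real"
  have "?c (four_block_mat A B (0\<^sub>m n2 n1) D) = four_block_mat (?c A) (?c B) (0\<^sub>m n2 n1) (?c D)"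
    using assms by (auto simp: map_four_block_mat[OF A B _ D])
  then have eig: "eigenvalue (?c (four_block_mat A B (0\<^sub>m n2 n1) D)) z \<longleftrightarrow>
      eigenvalue (?c A) z \<or> eigenvalue (?c D) z" for z
    using eigenvalue_four_block_mat_lower_left_zero[of "?c A" n1 "?c B" n2 "?c D"] assms by simp
  have "dim_row (four_block_mat A B (0\<^sub>m n2 n1) D) = dim_col (four_block_mat A B (0\<^sub>m n2 n1) D)"
    "dim_row A = dim_col A" "dim_row D = dim_col D"
    using assms by auto
  then show ?thesis
    unfolding hurwitz_def eig by blast
qed

lemma hurwitz_diag_block_mat:
  assumes G: "\<forall>i\<in>set is. G i \<in> carrier_mat (r i) (r i)"
  shows "hurwitz (diag_block_mat (map G is)) \<longleftrightarrow> (\<forall>i\<in>set is. hurwitz (G i))"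
proof -
  let ?c = "map_mat complex_of_real"
  have "?c (diag_block_mat (map G is)) = diag_block_mat (map (\<lambda>i. ?c (G i)) is)"
    by (simp add: map_mat_diag_block_mat o_def)
  then have eig: "eigenvalue (?c (diag_block_mat (map G is))) z \<longleftrightarrow> (\<exists>i\<in>set is. eigenvalue (?c (G i)) z)" for z
    using eigenvalue_diag_block_mat[of "is" "\<lambda>i. ?c (G i)" r] G by simp
  have "diag_block_mat (map G is) \<in> carrier_mat (sum_list (map r is)) (sum_list (map r is))"
    using G by (rule diag_block_mat_carrier)
  then show ?thesis
    using G unfolding hurwitz_def eig by auto
qed

lemma hurwitz_imp_det_nonzero:
  assumes "hurwitz G" and G: "G \<in> carrier_mat n n"
  shows "det G \<noteq> 0"
proof
  assume "det G = 0"
  have "char_matrix (map_mat complex_of_real G) 0 = map_mat complex_of_real G"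
    using G by (intro eq_matI) (auto simp: char_matrix_def)
  then have "det (char_matrix (map_mat complex_of_real G) 0) = 0"
    using \<open>det G = 0\<close> by simp
  then have "eigenvalue (map_mat complex_of_real G) 0"
    using G by (simp add: eigenvalue_det[of _ n])
  with assms show False
    unfolding hurwitz_def by auto
qed

section \<open>Separation of the closed loop\<close>

definition observer_matrix :: "real mat \<Rightarrow> real mat \<Rightarrow> real \<Rightarrow> real mat" where
  "observer_matrix S H \<mu> = kron (1\<^sub>m (dim_row H)) S - \<mu> \<cdot>\<^sub>m kron H (1\<^sub>m (dim_row S))"

lemma observer_matrix_carrier:
  "S \<in> carrier_mat q q \<Longrightarrow> H \<in> carrier_mat N N \<Longrightarrow> observer_matrix S H \<mu> \<in> carrier_mat (N * q) (N * q)"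
  unfolding observer_matrix_def kron_def by auto

lemma hurwitz_closed_loop_iff:
  fixes Ai Bi K1 K2 :: "nat \<Rightarrow> real mat"
  assumes dims: "\<forall>i\<in>{1..N}. Ai i \<in> carrier_mat (n i) (n i) \<and> Bi i \<in> carrier_mat (n i) (m i)
       \<and> K1 i \<in> carrier_mat (m i) (n i) \<and> K2 i \<in> carrier_mat (m i) q"
    and S: "S \<in> carrier_mat q q" and H: "H \<in> carrier_mat N N"
  shows "hurwitz (closed_loop (bdiag Ai N) (bdiag Bi N) (bdiag K1 N) (bdiag K2 N) S H \<mu>) \<longleftrightarrow>
    (\<forall>i\<in>{1..N}. hurwitz (Ai i + Bi i * K1 i)) \<and> hurwitz (observer_matrix S H \<mu>)"
proof -
  let ?is = "[1..<Suc N]"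
  let ?sn = "sum_list (map n ?is)" and ?sm = "sum_list (map m ?is)"
  have set_is: "set ?is = {1..N}"
    by auto
  have AA: "bdiag Ai N \<in> carrier_mat ?sn ?sn" and BB: "bdiag Bi N \<in> carrier_mat ?sn ?sm"
    and KK: "bdiag K1 N \<in> carrier_mat ?sm ?sn"
    and "bdiag K2 N \<in> carrier_mat ?sm (sum_list (map (\<lambda>_. q) ?is))"
    unfolding bdiag_def by (rule diag_block_mat_carrier; use dims in auto)+
  moreover have "sum_list (map (\<lambda>_. q) ?is) = N * q"
    by (simp add: sum_list_triv del: upt_Suc)
  ultimately have KK2: "bdiag K2 N \<in> carrier_mat ?sm (N * q)"
    by simp
  have L: "observer_matrix S H \<mu> \<in> carrier_mat (N * q) (N * q)"
    using S H by (rule observer_matrix_carrier)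
  have BK: "bdiag Bi N * bdiag K1 N = diag_block_mat (map (\<lambda>i. Bi i * K1 i) ?is)"
    unfolding bdiag_def by (rule diag_block_mat_mult[where n = n and m = m and p = n]) (use dims in auto)
  have ABK: "bdiag Ai N + bdiag Bi N * bdiag K1 N = diag_block_mat (map (\<lambda>i. Ai i + Bi i * K1 i) ?is)"
    unfolding BK unfolding bdiag_def
    by (rule diag_block_mat_add[where n = n and m = n]) (use dims in \<open>auto intro: mult_carrier_mat\<close>)
  have "closed_loop (bdiag Ai N) (bdiag Bi N) (bdiag K1 N) (bdiag K2 N) S H \<mu>
      = four_block_mat (bdiag Ai N + bdiag Bi N * bdiag K1 N) (bdiag Bi N * bdiag K2 N)
          (0\<^sub>m (N * q) ?sn) (observer_matrix S H \<mu>)"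
    unfolding closed_loop_def observer_matrix_def Let_def using AA H S by (simp add: kron_def)
  also have "hurwitz \<dots> \<longleftrightarrow> hurwitz (bdiag Ai N + bdiag Bi N * bdiag K1 N) \<and> hurwitz (observer_matrix S H \<mu>)"
    using AA BB KK KK2 L by (intro hurwitz_four_block_mat_lower_left_zero) auto
  also have "hurwitz (bdiag Ai N + bdiag Bi N * bdiag K1 N) \<longleftrightarrow> (\<forall>i\<in>{1..N}. hurwitz (Ai i + Bi i * K1 i))"
    unfolding ABK using dims set_is by (subst hurwitz_diag_block_mat[where r = n]) auto
  finally show ?thesis .
qed

section \<open>Gains that stabilize every system consistent with the data\<close>

lemma left_null_annihilates_column_combination:
  fixes M :: "nat \<Rightarrow> nat \<Rightarrow> 'a::comm_semiring_0"
  assumes "\<forall>j<c. (\<Sum>k<r. \<xi> k * M k j) = 0" and "\<forall>k<r. (\<Sum>j<c. M k j * y j) = v k"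
  shows "(\<Sum>k<r. \<xi> k * v k) = 0"
proof -
  have "(\<Sum>k<r. \<xi> k * v k) = (\<Sum>k<r. \<xi> k * (\<Sum>j<c. M k j * y j))"
    using assms(2) by (intro sum.cong) auto
  also have "\<dots> = (\<Sum>j<c. y j * (\<Sum>k<r. \<xi> k * M k j))"
    by (simp add: sum_distrib_left sum.swap[of _ "{..<c}"] ac_simps)
  finally show ?thesis
    using assms(1) by simp
qed

lemma linear_system_alternative_independent_column:
  fixes M :: "nat \<Rightarrow> nat \<Rightarrow> 'a::field"
  assumes \<xi>1: "\<forall>j<c. (\<Sum>k<r. \<xi>1 k * M k j) = 0" "(\<Sum>k<r. \<xi>1 k * M k c) \<noteq> 0"
    and t: "t = (\<Sum>k<r. \<xi>1 k * g k) / (\<Sum>k<r. \<xi>1 k * M k c)"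
    and IH: "(\<exists>y. \<forall>k<r. (\<Sum>j<c. M k j * y j) = g k - t * M k c) \<or>
      (\<exists>\<xi>. (\<forall>j<c. (\<Sum>k<r. \<xi> k * M k j) = 0) \<and> (\<Sum>k<r. \<xi> k * (g k - t * M k c)) \<noteq> 0)"
  shows "(\<exists>y. \<forall>k<r. (\<Sum>j<Suc c. M k j * y j) = g k) \<or>
    (\<exists>\<xi>. (\<forall>j<Suc c. (\<Sum>k<r. \<xi> k * M k j) = 0) \<and> (\<Sum>k<r. \<xi> k * g k) \<noteq> 0)"
  using IH
proof (elim disjE exE conjE)
  fix y assume "\<forall>k<r. (\<Sum>j<c. M k j * y j) = g k - t * M k c"
  then have "\<forall>k<r. (\<Sum>j<Suc c. M k j * (y(c := t)) j) = g k"
    by simp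
  then show ?thesis
    by blast
next
  fix \<xi>2 assume \<xi>2: "\<forall>j<c. (\<Sum>k<r. \<xi>2 k * M k j) = 0" "(\<Sum>k<r. \<xi>2 k * (g k - t * M k c)) \<noteq> 0"
  define s where "s = (\<Sum>k<r. \<xi>2 k * M k c) / (\<Sum>k<r. \<xi>1 k * M k c)"
  define \<xi> where "\<xi> k = \<xi>2 k - s * \<xi>1 k" for k
  have lin: "(\<Sum>k<r. \<xi> k * f k) = (\<Sum>k<r. \<xi>2 k * f k) - s * (\<Sum>k<r. \<xi>1 k * f k)" for f
    unfolding \<xi>_def by (simp add: algebra_simps sum_subtractf sum_distrib_left)
  have "\<forall>j<Suc c. (\<Sum>k<r. \<xi> k * M k j) = 0"
    using \<xi>1 \<xi>2(1) by (auto simp: lin s_def less_Suc_eq)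
  moreover have "s * (\<Sum>k<r. \<xi>1 k * g k) = (\<Sum>k<r. \<xi>2 k * M k c) * t"
    unfolding s_def t using \<xi>1(2) by simp
  then have "(\<Sum>k<r. \<xi> k * g k) = (\<Sum>k<r. \<xi>2 k * (g k - t * M k c))"
    by (simp add: lin algebra_simps sum_subtractf sum_distrib_left sum_distrib_right)
  ultimately show ?thesis
    using \<xi>2(2) by auto
qed

lemma linear_system_alternative:
  fixes M :: "nat \<Rightarrow> nat \<Rightarrow> 'a::field"
  shows "(\<exists>y. \<forall>k<r. (\<Sum>j<c. M k j * y j) = g k) \<or>
         (\<exists>\<xi>. (\<forall>j<c. (\<Sum>k<r. \<xi> k * M k j) = 0) \<and> (\<Sum>k<r. \<xi> k * g k) \<noteq> 0)"
proof (induction c arbitrary: g)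
  case 0
  show ?case
  proof (cases "\<forall>k<r. g k = 0")
    case False
    then obtain k0 where "k0 < r" "g k0 \<noteq> 0"
      by auto
    moreover have "(\<Sum>k<r. (if k = k0 then 1 else 0) * g k) = (\<Sum>k<r. if k = k0 then g k else 0)"
      by (rule sum.cong) auto
    ultimately show ?thesis
      by (intro disjI2 exI[of _ "\<lambda>k. if k = k0 then 1 else 0"]) simp
  qed auto
next
  case (Suc c)
  from Suc.IH[of "\<lambda>k. M k c"] show ?case
  proof (elim disjE exE conjE)
    fix y' assume y': "\<forall>k<r. (\<Sum>j<c. M k j * y' j) = M k c"
    from Suc.IH[of g] show ?thesis
    proof (elim disjE exE conjE)
      fix y assume "\<forall>k<r. (\<Sum>j<c. M k j * y j) = g k"
      then have "\<forall>k<r. (\<Sum>j<Suc c. M k j * (y(c := 0)) j) = g k"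
        by simp
      then show ?thesis
        by blast
    next
      fix \<xi> assume \<xi>: "\<forall>j<c. (\<Sum>k<r. \<xi> k * M k j) = 0" "(\<Sum>k<r. \<xi> k * g k) \<noteq> 0"
      then have "\<forall>j<Suc c. (\<Sum>k<r. \<xi> k * M k j) = 0"
        using left_null_annihilates_column_combination[OF \<xi>(1) y'] less_Suc_eq by auto
      then show ?thesis
        using \<xi>(2) by blast
    qed
  next
    fix \<xi>1 assume "\<forall>j<c. (\<Sum>k<r. \<xi>1 k * M k j) = 0" "(\<Sum>k<r. \<xi>1 k * M k c) \<noteq> 0"
    then show ?thesis
      using Suc.IH by (rule linear_system_alternative_independent_column[OF _ _ refl])
  qed
qed

lemma solvable_if_left_kernel_subset:
  fixes M G :: "'a::field mat"
  assumes M: "M \<in> carrier_mat r c" and G: "G \<in> carrier_mat r s"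
    and ker: "\<And>y. y \<in> carrier_vec r \<Longrightarrow> mat_of_row y * M = 0\<^sub>m 1 c \<Longrightarrow> mat_of_row y * G = 0\<^sub>m 1 s"
  shows "\<exists>Y \<in> carrier_mat c s. M * Y = G"
proof -
  have "\<exists>y. \<forall>k<r. (\<Sum>j<c. M $$ (k, j) * y j) = G $$ (k, p)" if p: "p < s" for p
    using linear_system_alternative[where r = r and c = c and M = "\<lambda>k j. M $$ (k, j)"
        and g = "\<lambda>k. G $$ (k, p)"]
  proof (elim disjE exE conjE)
    fix \<xi> assume \<xi>: "\<forall>j<c. (\<Sum>k<r. \<xi> k * M $$ (k, j)) = 0" "(\<Sum>k<r. \<xi> k * G $$ (k, p)) \<noteq> 0"
    have "mat_of_row (vec r \<xi>) * M = 0\<^sub>m 1 c"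
      using M \<xi>(1) by (intro eq_matI) (auto simp: scalar_prod_def atLeast0LessThan)
    then have "mat_of_row (vec r \<xi>) * G = 0\<^sub>m 1 s"
      by (intro ker) auto
    then have "(mat_of_row (vec r \<xi>) * G) $$ (0, p) = 0"
      using p by simp
    with \<xi>(2) p G show ?thesis
      by (simp add: scalar_prod_def atLeast0LessThan)
  qed blast
  then obtain y where y: "\<And>p k. p < s \<Longrightarrow> k < r \<Longrightarrow> (\<Sum>j<c. M $$ (k, j) * y p j) = G $$ (k, p)"
    by metis
  define Y where "Y = mat c s (\<lambda>(j, p). y p j)"
  have "M * Y = G"
    using M G y by (intro eq_matI) (auto simp: Y_def scalar_prod_def atLeast0LessThan)
  then show ?thesis
    unfolding Y_def by auto
qed

lemma add_add_swap_mat: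
  fixes P Q R T :: "'a::comm_monoid_add mat"
  assumes "P \<in> carrier_mat a b" "Q \<in> carrier_mat a b" "R \<in> carrier_mat a b" "T \<in> carrier_mat a b"
  shows "(P + Q) + (R + T) = (P + R) + (Q + T)"
  using assms by (intro eq_matI) (auto simp: ac_simps)

lemma common_factor_update_mult:
  fixes A0 B0 W R1 R2 Y Z :: "'a::semiring_0 mat"
  assumes A0: "A0 \<in> carrier_mat n k" and B0: "B0 \<in> carrier_mat n m" and W: "W \<in> carrier_mat n p"
    and R1: "R1 \<in> carrier_mat p k" and R2: "R2 \<in> carrier_mat p m"
    and Y: "Y \<in> carrier_mat k c" and Z: "Z \<in> carrier_mat m c"
  shows "(A0 + W * R1) * Y + (B0 + W * R2) * Z = (A0 * Y + B0 * Z) + W * (R1 * Y + R2 * Z)"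
proof -
  have "(A0 + W * R1) * Y + (B0 + W * R2) * Z = (A0 * Y + W * R1 * Y) + (B0 * Z + W * R2 * Z)"
    using assms by (simp add: add_mult_distrib_mat)
  also have "\<dots> = (A0 * Y + B0 * Z) + (W * (R1 * Y) + W * (R2 * Z))"
    using assms by (simp only: assoc_mult_mat[OF W R1 Y] assoc_mult_mat[OF W R2 Z])
      (rule add_add_swap_mat; auto)
  also have "W * (R1 * Y) + W * (R2 * Z) = W * (R1 * Y + R2 * Z)"
    using assms by (intro mult_add_distrib_mat[symmetric]) auto
  finally show ?thesis .
qed

lemma nonzero_row_right_inverse:
  fixes C :: "'a::field mat"
  assumes C: "C \<in> carrier_mat 1 n" and nz: "C \<noteq> 0\<^sub>m 1 n"
  obtains v where "v \<in> carrier_vec n" "v \<noteq> 0\<^sub>v n" "C *\<^sub>v v = vec 1 (\<lambda>_. 1)"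
proof -
  have "C = 0\<^sub>m 1 n" if "\<forall>p<n. C $$ (0, p) = 0"
    using C that by (intro eq_matI) auto
  then have "\<exists>p<n. C $$ (0, p) \<noteq> 0"
    using nz by blast
  then obtain p where p: "p < n" "C $$ (0, p) \<noteq> 0"
    by blast
  define v where "v = vec n (\<lambda>i. if i = p then inverse (C $$ (0, p)) else 0)"
  have v: "v \<in> carrier_vec n" "v \<noteq> 0\<^sub>v n"
    using p by (auto simp: v_def dest!: arg_cong[of _ _ "\<lambda>x. x $ p"])
  have "(C *\<^sub>v v) $ 0 = (\<Sum>i<n. C $$ (0, i) * v $ i)"
    using C v by (simp add: scalar_prod_def atLeast0LessThan)
  also have "\<dots> = (\<Sum>i<n. if i = p then C $$ (0, i) * inverse (C $$ (0, p)) else 0)"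
    by (rule sum.cong) (simp_all add: v_def)
  also have "\<dots> = 1"
    using p by simp
  finally have "C *\<^sub>v v = vec 1 (\<lambda>_. 1)"
    using C by (intro eq_vecI) auto
  with v that show ?thesis
    by blast
qed

text \<open>The perturbation \<open>(W y1\<^sup>T, W y2\<^sup>T)\<close> is invisible in the data because \<open>(y1, y2)\<close>
  annihilates \<open>[X; U]\<close>; the column \<open>W\<close> is chosen so that \<open>A + B K\<close> maps \<open>v\<close> to zero.\<close>

lemma data_consistent_perturbation_singular:
  fixes X U K A0 B0 :: "'a::field mat"
  assumes X: "X \<in> carrier_mat n r" and U: "U \<in> carrier_mat m r" and K: "K \<in> carrier_mat m n"
    and A0: "A0 \<in> carrier_mat n n" and B0: "B0 \<in> carrier_mat n m"
    and y1: "y1 \<in> carrier_vec n" and y2: "y2 \<in> carrier_vec m"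
    and annihilates_data: "mat_of_row y1 * X + mat_of_row y2 * U = 0\<^sub>m 1 r"
    and not_annihilates_gain: "mat_of_row y1 + mat_of_row y2 * K \<noteq> 0\<^sub>m 1 n"
  shows "\<exists>A \<in> carrier_mat n n. \<exists>B \<in> carrier_mat n m. A * X + B * U = A0 * X + B0 * U \<and> det (A + B * K) = 0"
proof -
  let ?R1 = "mat_of_row y1" and ?R2 = "mat_of_row y2"
  define C where "C = ?R1 + ?R2 * K"
  have R1: "?R1 \<in> carrier_mat 1 n" and R2: "?R2 \<in> carrier_mat 1 m" and C: "C \<in> carrier_mat 1 n"
    using y1 y2 K by (auto simp: C_def)
  obtain v where v: "v \<in> carrier_vec n" "v \<noteq> 0\<^sub>v n" and Cv: "C *\<^sub>v v = vec 1 (\<lambda>_. 1)"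
    using nonzero_row_right_inverse[OF C] not_annihilates_gain unfolding C_def by blast
  define G0 where "G0 = A0 + B0 * K"
  have G0: "G0 \<in> carrier_mat n n"
    using A0 B0 K by (simp add: G0_def)
  define W where "W = mat_of_cols n [- (G0 *\<^sub>v v)]"
  have W: "W \<in> carrier_mat n 1"
    by (simp add: W_def mat_of_cols_def)
  have W1: "W *\<^sub>v vec 1 (\<lambda>_. 1) = - (G0 *\<^sub>v v)"
    using G0 v by (intro eq_vecI) (auto simp: W_def mat_of_cols_def scalar_prod_def)
  define A where "A = A0 + W * ?R1"
  define B where "B = B0 + W * ?R2"
  have A: "A \<in> carrier_mat n n" and B: "B \<in> carrier_mat n m"
    using A0 B0 W R1 R2 by (auto simp: A_def B_def)
  have consistent: "A * X + B * U = A0 * X + B0 * U"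
    unfolding A_def B_def common_factor_update_mult[OF A0 B0 W R1 R2 X U] annihilates_data
    using A0 B0 W X U by simp
  have "A + B * K = G0 + W * C"
    using common_factor_update_mult[OF A0 B0 W R1 R2 one_carrier_mat K] A0 A
    by (simp add: A_def[symmetric] B_def[symmetric] G0_def C_def right_mult_one_mat[OF R1])
  then have "(A + B * K) *\<^sub>v v = G0 *\<^sub>v v + W *\<^sub>v (C *\<^sub>v v)"
    using G0 W C v by (simp add: add_mult_distrib_mat_vec assoc_mult_mat_vec)
  also have "\<dots> = 0\<^sub>v n"
    unfolding Cv W1 using G0 v by simp
  finally have "det (A + B * K) = 0"
    using A B K v by (subst det_0_iff_vec_prod_zero_field[of _ n]) auto
  with A B consistent show ?thesis
    by blast
qed

lemma append_rows_mult:
  assumes "A \<in> carrier_mat nr1 nc" "B \<in> carrier_mat nr2 nc" "Y \<in> carrier_mat nc s"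
  shows "(A @\<^sub>r B) * Y = (A * Y) @\<^sub>r (B * Y)"
  using assms by (intro eq_matI) (auto simp: append_rows_def scalar_prod_def intro!: sum.cong)

lemma append_rows_inj:
  assumes A: "A \<in> carrier_mat nr1 nc" and C: "C \<in> carrier_mat nr1 nc"
    and B: "B \<in> carrier_mat nr2 nc" and D: "D \<in> carrier_mat nr2 nc"
    and eq: "A @\<^sub>r B = C @\<^sub>r D"
  shows "A = C" and "B = D"
proof -
  show "A = C"
  proof (rule eq_matI)
    fix i j assume "i < dim_row C" "j < dim_col C"
    then show "A $$ (i, j) = C $$ (i, j)"
      using arg_cong[OF eq, of "\<lambda>M. M $$ (i, j)"] assms by (auto simp: append_rows_def)
  qed (use A C in auto)
  show "B = D"
  proof (rule eq_matI)
    fix i j assume "i < dim_row D" "j < dim_col D"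
    then show "B $$ (i, j) = D $$ (i, j)"
      using arg_cong[OF eq, of "\<lambda>M. M $$ (nr1 + i, j)"] assms by (auto simp: append_rows_def)
  qed (use B D in auto)
qed

lemma robust_stabilizing_gain_factors_through_data:
  fixes X U K A0 B0 :: "real mat"
  assumes X: "X \<in> carrier_mat n r" and U: "U \<in> carrier_mat m r" and K: "K \<in> carrier_mat m n"
    and A0: "A0 \<in> carrier_mat n n" and B0: "B0 \<in> carrier_mat n m"
    and stab: "\<And>A B. A \<in> carrier_mat n n \<Longrightarrow> B \<in> carrier_mat n m \<Longrightarrow>
      A * X + B * U = A0 * X + B0 * U \<Longrightarrow> hurwitz (A + B * K)"
  shows "\<exists>Xp \<in> carrier_mat r n. X * Xp = 1\<^sub>m n \<and> U * Xp = K"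
proof -
  have "\<exists>Y \<in> carrier_mat r n. (X @\<^sub>r U) * Y = 1\<^sub>m n @\<^sub>r K"
  proof (rule solvable_if_left_kernel_subset)
    fix y :: "real vec"
    assume y: "y \<in> carrier_vec (n + m)" and ann: "mat_of_row y * (X @\<^sub>r U) = 0\<^sub>m 1 r"
    define y1 where "y1 = vec_first y n"
    define y2 where "y2 = vec_last y m"
    have y12: "y = y1 @\<^sub>v y2" "y1 \<in> carrier_vec n" "y2 \<in> carrier_vec m"
      using y by (auto simp: y1_def y2_def)
    have "mat_of_row y1 * X + mat_of_row y2 * U = 0\<^sub>m 1 r"
      using ann mat_of_row_mult_append_rows[OF y12(2,3) X U] by (simp add: y12(1))
    moreover have "det (A + B * K) \<noteq> 0" if "A \<in> carrier_mat n n" "B \<in> carrier_mat n m"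
      "A * X + B * U = A0 * X + B0 * U" for A B
      using that K by (intro hurwitz_imp_det_nonzero[of _ n] stab) auto
    ultimately have "mat_of_row y1 + mat_of_row y2 * K = 0\<^sub>m 1 n"
      using data_consistent_perturbation_singular[OF X U K A0 B0 y12(2,3)] by blast
    then show "mat_of_row y * (1\<^sub>m n @\<^sub>r K) = 0\<^sub>m 1 n"
      using mat_of_row_mult_append_rows[OF y12(2,3) one_carrier_mat K] y12 by simp
  qed (use X U K in auto)
  then obtain Y where Y: "Y \<in> carrier_mat r n" and "(X @\<^sub>r U) * Y = 1\<^sub>m n @\<^sub>r K"
    by blast
  then have "(X * Y) @\<^sub>r (U * Y) = 1\<^sub>m n @\<^sub>r K"
    using X U by (simp add: append_rows_mult)
  then have "X * Y = 1\<^sub>m n" "U * Y = K"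
    using append_rows_inj[of "X * Y" n n "1\<^sub>m n" "U * Y" m K] X U Y K by auto
  with Y show ?thesis
    by blast
qed

lemma right_inverse_closed_loop:
  fixes X U A B E V D Xp :: "'a::comm_ring_1 mat"
  assumes X: "X \<in> carrier_mat n r" and U: "U \<in> carrier_mat m r" and A: "A \<in> carrier_mat n n"
    and B: "B \<in> carrier_mat n m" and E: "E \<in> carrier_mat n q" and V: "V \<in> carrier_mat q r"
    and D: "D \<in> carrier_mat r r" and Xp: "Xp \<in> carrier_mat r n"
    and data: "X * D = A * X + B * U + E * V" and right_inv: "X * Xp = 1\<^sub>m n"
  shows "(X * D - E * V) * Xp = A + B * (U * Xp)"
proof -
  have "X * D - E * V = A * X + B * U"
    unfolding data using A X B U E V by (intro eq_matI) auto
  then have "(X * D - E * V) * Xp = A * X * Xp + B * U * Xp"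
    using A X B U Xp by (simp add: add_mult_distrib_mat[of _ n r])
  also have "\<dots> = A * (X * Xp) + B * (U * Xp)"
    using A X B U Xp by (simp add: assoc_mult_mat[of _ n n] assoc_mult_mat[of _ n m])
  also have "\<dots> = A + B * (U * Xp)"
    using A right_inv by simp
  finally show ?thesis .
qed

section \<open>Spectral abscissa of the observer matrix\<close>

lemma mult_add_less_mult:
  fixes i k q :: nat
  assumes "i < N" "k < q"
  shows "i * q + k < N * q"
proof -
  have "i * q + k < Suc i * q"
    using assms by simp
  also have "\<dots> \<le> N * q"
    using assms by (intro mult_right_mono) auto
  finally show ?thesis .
qed

lemma observer_matrix_index:
  assumes S: "S \<in> carrier_mat q q" and H: "H \<in> carrier_mat N N"
    and "i < N" "k < q" "j < N" "l < q"
  shows "observer_matrix S H \<mu> $$ (i * q + k, j * q + l)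
    = (if i = j then S $$ (k, l) else 0) - \<mu> * (if k = l then H $$ (i, j) else 0)"
  using assms mult_add_less_mult[of i N k q] mult_add_less_mult[of j N l q]
  by (simp add: observer_matrix_def kron_def)

lemma weighted_max_entry:
  fixes v :: "'a::real_normed_vector vec"
  assumes v: "v \<in> carrier_vec n" "v \<noteq> 0\<^sub>v n" and \<omega>: "\<And>k. k < n \<Longrightarrow> 0 < \<omega> k"
  obtains r R where "r < n" "0 < R" "norm (v $ r) = R * \<omega> r" "\<And>c. c < n \<Longrightarrow> norm (v $ c) \<le> R * \<omega> c"
proof -
  have "\<exists>c<n. v $ c \<noteq> 0"
    using v by (metis eq_vecI carrier_vecD index_zero_vec)
  then obtain c0 where c0: "c0 < n" "v $ c0 \<noteq> 0"
    by blast
  define R where "R = Max ((\<lambda>c. norm (v $ c) / \<omega> c) ` {..<n})"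
  have "R \<in> (\<lambda>c. norm (v $ c) / \<omega> c) ` {..<n}"
    unfolding R_def using c0 by (intro Max_in) auto
  then obtain r where r: "r < n" "R = norm (v $ r) / \<omega> r"
    by auto
  have bound: "norm (v $ c) \<le> R * \<omega> c" if "c < n" for c
  proof -
    have "norm (v $ c) / \<omega> c \<le> R"
      unfolding R_def using that by (intro Max_ge) auto
    then show ?thesis
      using \<omega>[OF that] by (simp add: pos_divide_le_eq)
  qed
  have "0 < R * \<omega> c0"
    using bound[OF c0(1)] c0(2) by (meson less_le_trans zero_less_norm_iff)
  then have "0 < R"
    using \<omega>[OF c0(1)] by (simp add: zero_less_mult_iff)
  with r bound \<omega>[OF r(1)] that show ?thesis
    by simp
qed

lemma eigenvalue_Re_le_weighted_row_bound:
  fixes A :: "complex mat"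
  assumes A: "A \<in> carrier_mat n n" and \<omega>: "\<And>k. k < n \<Longrightarrow> 0 < \<omega> k"
    and rows: "\<And>r. r < n \<Longrightarrow>
      Re (A $$ (r, r)) * \<omega> r + (\<Sum>c\<in>{..<n} - {r}. cmod (A $$ (r, c)) * \<omega> c) \<le> \<beta> * \<omega> r"
    and ev: "eigenvalue A z"
  shows "Re z \<le> \<beta>"
proof -
  obtain v where v: "v \<in> carrier_vec n" "v \<noteq> 0\<^sub>v n" "A *\<^sub>v v = z \<cdot>\<^sub>v v"
    using ev A unfolding eigenvalue_def eigenvector_def by auto
  obtain r R where r: "r < n" "0 < R" "cmod (v $ r) = R * \<omega> r"
    and bound: "\<And>c. c < n \<Longrightarrow> cmod (v $ c) \<le> R * \<omega> c"
    using weighted_max_entry[where \<omega> = \<omega>, OF v(1,2)] \<omega> by blast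
  have "z * v $ r = (\<Sum>c<n. A $$ (r, c) * v $ c)"
    using arg_cong[OF v(3), of "\<lambda>x. x $ r"] A v(1) r(1)
    by (simp add: scalar_prod_def atLeast0LessThan)
  also have "\<dots> = A $$ (r, r) * v $ r + (\<Sum>c\<in>{..<n} - {r}. A $$ (r, c) * v $ c)"
    using r(1) by (simp add: sum.remove)
  finally have "(z - A $$ (r, r)) * v $ r = (\<Sum>c\<in>{..<n} - {r}. A $$ (r, c) * v $ c)"
    by (simp add: algebra_simps)
  then have "cmod (z - A $$ (r, r)) * cmod (v $ r) \<le> (\<Sum>c\<in>{..<n} - {r}. cmod (A $$ (r, c) * v $ c))"
    by (metis norm_mult norm_sum)
  also have "\<dots> \<le> (\<Sum>c\<in>{..<n} - {r}. cmod (A $$ (r, c)) * (R * \<omega> c))"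
    using bound by (intro sum_mono) (simp add: norm_mult mult_left_mono)
  finally have "cmod (z - A $$ (r, r)) * (R * \<omega> r) \<le> (\<Sum>c\<in>{..<n} - {r}. cmod (A $$ (r, c)) * (R * \<omega> c))"
    using r(3) by simp
  then have "R * (cmod (z - A $$ (r, r)) * \<omega> r) \<le> R * (\<Sum>c\<in>{..<n} - {r}. cmod (A $$ (r, c)) * \<omega> c)"
    by (simp add: sum_distrib_left algebra_simps)
  then have "cmod (z - A $$ (r, r)) * \<omega> r \<le> (\<Sum>c\<in>{..<n} - {r}. cmod (A $$ (r, c)) * \<omega> c)"
    using r(2) by simp
  moreover have "(Re z - Re (A $$ (r, r))) * \<omega> r \<le> cmod (z - A $$ (r, r)) * \<omega> r"
    using \<omega>[OF r(1)] complex_Re_le_cmod[of "z - A $$ (r, r)"] by (intro mult_right_mono) auto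
  ultimately have "Re z * \<omega> r \<le> \<beta> * \<omega> r"
    using rows[OF r(1)] by (simp add: algebra_simps)
  then show ?thesis
    using \<omega>[OF r(1)] by simp
qed

lemma mult_index_cases:
  fixes c q i k N :: nat
  assumes "c div q = i \<or> c mod q = k" and "c < N * q" and "i < N"
  shows "c = i * q + k \<or> c \<in> (\<lambda>l. i * q + l) ` ({..<q} - {k}) \<or> c \<in> (\<lambda>j. j * q + k) ` ({..<N} - {i})"
proof -
  have q: "0 < q"
    using assms(2) by (cases q) auto
  have c: "c div q < N" "c mod q < q"
    using assms(2) q by (auto simp: less_mult_imp_div_less)
  consider "c div q = i" "c mod q \<noteq> k" | "c mod q = k" "c div q \<noteq> i" | "c div q = i" "c mod q = k"
    using assms(1) by blast
  then show ?thesis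
  proof cases
    case 1
    then have "c \<in> (\<lambda>l. i * q + l) ` ({..<q} - {k})"
      using c div_mult_mod_eq[of c q] by (intro image_eqI[of _ _ "c mod q"]) auto
    then show ?thesis
      by blast
  next
    case 2
    then have "c \<in> (\<lambda>j. j * q + k) ` ({..<N} - {i})"
      using c div_mult_mod_eq[of c q] by (intro image_eqI[of _ _ "c div q"]) auto
    then show ?thesis
      by blast
  next
    case 3
    then show ?thesis
      using div_mult_mod_eq[of c q] by auto
  qed
qed

lemma observer_matrix_offdiag_row_sum:
  assumes S: "S \<in> carrier_mat q q" and H: "H \<in> carrier_mat N N" and i: "i < N" and k: "k < q"
    and offdiag: "\<And>j. j < N \<Longrightarrow> j \<noteq> i \<Longrightarrow> H $$ (i, j) \<le> 0" and \<mu>: "0 \<le> \<mu>"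
  shows "(\<Sum>c\<in>{..<N * q} - {i * q + k}. cmod (complex_of_real (observer_matrix S H \<mu> $$ (i * q + k, c))) * w (c div q))
    = (\<Sum>l\<in>{..<q} - {k}. \<bar>S $$ (k, l)\<bar>) * w i - \<mu> * (\<Sum>j\<in>{..<N} - {i}. H $$ (i, j) * w j)"
proof -
  let ?r = "i * q + k"
  let ?g = "\<lambda>c. cmod (complex_of_real (observer_matrix S H \<mu> $$ (?r, c))) * w (c div q)"
  define P where "P = (\<lambda>l. i * q + l) ` ({..<q} - {k})"
  define Q where "Q = (\<lambda>j. j * q + k) ` ({..<N} - {i})"
  have q: "0 < q"
    using k by simp
  have same_offset: "l = k" if "i * q + l = j * q + k" "l < q" for j l
    using arg_cong[OF that(1), of "\<lambda>x. x mod q"] that(2) k by simp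
  have PQ: "P \<inter> Q = {}"
    unfolding P_def Q_def by (blast dest: same_offset)
  have PQ_sub: "P \<union> Q \<subseteq> {..<N * q} - {?r}"
    unfolding P_def Q_def using i k mult_add_less_mult[of i N _ q] mult_add_less_mult[of _ N k q] by auto
  have zero: "?g c = 0" if "c \<in> ({..<N * q} - {?r}) - (P \<union> Q)" for c
  proof -
    have "c div q \<noteq> i" "c mod q \<noteq> k"
      using that mult_index_cases[of c q i k N] i unfolding P_def Q_def by auto
    moreover have "c = (c div q) * q + c mod q" "c div q < N" "c mod q < q"
      using that q by (auto simp: less_mult_imp_div_less)
    ultimately show ?thesis
      using observer_matrix_index[OF S H i k, of "c div q" "c mod q" \<mu>] by simp
  qed
  have "(\<Sum>c\<in>{..<N * q} - {?r}. ?g c) = (\<Sum>c\<in>P \<union> Q. ?g c)"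
    using PQ_sub zero by (intro sum.mono_neutral_right) auto
  also have "\<dots> = (\<Sum>c\<in>P. ?g c) + (\<Sum>c\<in>Q. ?g c)"
    using PQ by (intro sum.union_disjoint) (auto simp: P_def Q_def)
  also have "(\<Sum>c\<in>P. ?g c) = (\<Sum>l\<in>{..<q} - {k}. \<bar>S $$ (k, l)\<bar>) * w i"
    unfolding P_def using observer_matrix_index[OF S H i k i] q
    by (subst sum.reindex) (auto simp: inj_on_def sum_distrib_right intro!: sum.cong)
  also have "(\<Sum>c\<in>Q. ?g c) = - \<mu> * (\<Sum>j\<in>{..<N} - {i}. H $$ (i, j) * w j)"
    unfolding Q_def using observer_matrix_index[OF S H i k _ k] offdiag \<mu> k
    by (subst sum.reindex) (auto simp: inj_on_def sum_distrib_left abs_mult intro!: sum.cong)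
  finally show ?thesis
    by simp
qed

lemma mult_vec_index_split_diag:
  assumes H: "H \<in> carrier_mat N N" and i: "i < N"
  shows "(H *\<^sub>v vec N w) $ i = H $$ (i, i) * w i + (\<Sum>j\<in>{..<N} - {i}. H $$ (i, j) * w j)"
  using H i by (simp add: scalar_prod_def atLeast0LessThan sum.remove)

lemma observer_matrix_weighted_row_bound:
  assumes S: "S \<in> carrier_mat q q" and H: "H \<in> carrier_mat N N"
    and offdiag: "\<And>i j. i < N \<Longrightarrow> j < N \<Longrightarrow> i \<noteq> j \<Longrightarrow> H $$ (i, j) \<le> 0"
    and w: "\<And>i. i < N \<Longrightarrow> 0 < w i \<and> w i \<le> 1"
    and margin: "\<And>i. i < N \<Longrightarrow> \<gamma> \<le> (H *\<^sub>v vec N w) $ i"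
    and "0 \<le> \<gamma>" "0 \<le> \<mu>" and r: "r < N * q"
  defines "L \<equiv> map_mat complex_of_real (observer_matrix S H \<mu>)"
  shows "Re (L $$ (r, r)) * w (r div q) + (\<Sum>c\<in>{..<N * q} - {r}. cmod (L $$ (r, c)) * w (c div q))
    \<le> ((\<Sum>k<q. \<Sum>l<q. \<bar>S $$ (k, l)\<bar>) - \<mu> * \<gamma>) * w (r div q)"
proof -
  define i k where "i = r div q" and "k = r mod q"
  have q: "0 < q"
    using r by (cases q) auto
  have i: "i < N" and k: "k < q" and r_eq: "r = i * q + k"
    using r q by (auto simp: i_def k_def less_mult_imp_div_less)
  have L: "observer_matrix S H \<mu> \<in> carrier_mat (N * q) (N * q)"
    using S H by (rule observer_matrix_carrier)
  have "(\<Sum>c\<in>{..<N * q} - {r}. cmod (L $$ (r, c)) * w (c div q))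
      = (\<Sum>c\<in>{..<N * q} - {r}. cmod (complex_of_real (observer_matrix S H \<mu> $$ (r, c))) * w (c div q))"
    using L r by (intro sum.cong) (auto simp: L_def)
  also have "\<dots> = (\<Sum>l\<in>{..<q} - {k}. \<bar>S $$ (k, l)\<bar>) * w i - \<mu> * (\<Sum>j\<in>{..<N} - {i}. H $$ (i, j) * w j)"
    unfolding r_eq using offdiag[OF i] \<open>0 \<le> \<mu>\<close> by (intro observer_matrix_offdiag_row_sum[OF S H i k]) auto
  finally have off: "(\<Sum>c\<in>{..<N * q} - {r}. cmod (L $$ (r, c)) * w (c div q))
      = (\<Sum>l\<in>{..<q} - {k}. \<bar>S $$ (k, l)\<bar>) * w i - \<mu> * (\<Sum>j\<in>{..<N} - {i}. H $$ (i, j) * w j)" .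
  have diag: "Re (L $$ (r, r)) = S $$ (k, k) - \<mu> * H $$ (i, i)"
    using L r observer_matrix_index[OF S H i k i k, of \<mu>] by (simp add: L_def r_eq[symmetric])
  have "S $$ (k, k) + (\<Sum>l\<in>{..<q} - {k}. \<bar>S $$ (k, l)\<bar>) \<le> (\<Sum>l<q. \<bar>S $$ (k, l)\<bar>)"
    using k by (simp add: sum.remove)
  also have "\<dots> \<le> (\<Sum>k<q. \<Sum>l<q. \<bar>S $$ (k, l)\<bar>)"
    using k by (intro member_le_sum) (auto intro: sum_nonneg)
  finally have S_row: "S $$ (k, k) + (\<Sum>l\<in>{..<q} - {k}. \<bar>S $$ (k, l)\<bar>) \<le> (\<Sum>k<q. \<Sum>l<q. \<bar>S $$ (k, l)\<bar>)" .
  have "\<mu> * (\<gamma> * w i) \<le> \<mu> * \<gamma>"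
    using w[OF i] \<open>0 \<le> \<mu>\<close> \<open>0 \<le> \<gamma>\<close> by (intro mult_left_mono) (auto simp: mult_left_le)
  moreover have "Re (L $$ (r, r)) * w i + (\<Sum>c\<in>{..<N * q} - {r}. cmod (L $$ (r, c)) * w (c div q))
      = (S $$ (k, k) + (\<Sum>l\<in>{..<q} - {k}. \<bar>S $$ (k, l)\<bar>)) * w i - \<mu> * (H *\<^sub>v vec N w) $ i"
    unfolding off diag mult_vec_index_split_diag[OF H i] by (simp add: algebra_simps)
  moreover have "\<dots> \<le> (\<Sum>k<q. \<Sum>l<q. \<bar>S $$ (k, l)\<bar>) * w i - \<mu> * \<gamma>"
    using S_row w[OF i] margin[OF i] \<open>0 \<le> \<mu>\<close> by (intro diff_mono mult_right_mono mult_left_mono) auto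
  ultimately show ?thesis
    unfolding i_def[symmetric] by (simp add: algebra_simps)
qed

lemma hurwitz_observer_matrix:
  assumes S: "S \<in> carrier_mat q q" and H: "H \<in> carrier_mat N N"
    and offdiag: "\<And>i j. i < N \<Longrightarrow> j < N \<Longrightarrow> i \<noteq> j \<Longrightarrow> H $$ (i, j) \<le> 0"
    and w: "\<And>i. i < N \<Longrightarrow> 0 < w i \<and> w i \<le> 1"
    and margin: "\<And>i. i < N \<Longrightarrow> \<gamma> \<le> (H *\<^sub>v vec N w) $ i"
    and \<gamma>: "0 < \<gamma>" and \<mu>: "(\<Sum>k<q. \<Sum>l<q. \<bar>S $$ (k, l)\<bar>) + 1 \<le> \<mu> * \<gamma>"
  shows "hurwitz (observer_matrix S H \<mu>)"
proof -
  let ?\<sigma> = "\<Sum>k<q. \<Sum>l<q. \<bar>S $$ (k, l)\<bar>"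
  let ?L = "map_mat complex_of_real (observer_matrix S H \<mu>)"
  have L: "observer_matrix S H \<mu> \<in> carrier_mat (N * q) (N * q)"
    using S H by (rule observer_matrix_carrier)
  have "0 \<le> ?\<sigma>"
    by (intro sum_nonneg) auto
  then have "0 < \<mu> * \<gamma>"
    using \<mu> by linarith
  then have "0 \<le> \<mu>"
    using \<gamma> by (simp add: zero_less_mult_iff)
  have "Re z < 0" if "eigenvalue ?L z" for z
  proof -
    have "Re z \<le> ?\<sigma> - \<mu> * \<gamma>"
    proof (rule eigenvalue_Re_le_weighted_row_bound[where \<omega> = "\<lambda>r. w (r div q)"])
      show "?L \<in> carrier_mat (N * q) (N * q)"
        using L by simp
      show "0 < w (r div q)" if "r < N * q" for r
        using w[of "r div q"] that by (cases q) (auto simp: less_mult_imp_div_less)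
    qed (use observer_matrix_weighted_row_bound[OF S H offdiag w margin] \<gamma> \<open>0 \<le> \<mu>\<close> that in auto)
    then show ?thesis
      using \<mu> by linarith
  qed
  then show ?thesis
    using L unfolding hurwitz_def by auto
qed

section \<open>Weighted diagonal dominance for admissible graphs\<close>

definition hop_distance :: "('a \<times> 'a) set \<Rightarrow> 'a \<Rightarrow> 'a \<Rightarrow> nat" where
  "hop_distance R x y = (LEAST t. (x, y) \<in> R ^^ t)"

lemma hop_distance_le: "(x, y) \<in> R ^^ t \<Longrightarrow> hop_distance R x y \<le> t"
  unfolding hop_distance_def by (rule Least_le)

lemma relpow_hop_distance: "(x, y) \<in> R\<^sup>* \<Longrightarrow> (x, y) \<in> R ^^ hop_distance R x y"
  unfolding hop_distance_def by (rule LeastI_ex) (simp add: rtrancl_power)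

lemma hop_distance_le_card:
  assumes "finite R" and "(x, y) \<in> R\<^sup>*"
  shows "hop_distance R x y \<le> card R"
proof -
  obtain t where "t \<le> card R" "(x, y) \<in> R ^^ t"
    using assms rtrancl_finite_eq_relpow[of R] by auto
  then show ?thesis
    using hop_distance_le[of x y] by (meson le_trans)
qed

lemma hop_distance_predecessor:
  assumes "(x, y) \<in> R\<^sup>*" and "y \<noteq> x"
  obtains z where "(z, y) \<in> R" and "Suc (hop_distance R x z) \<le> hop_distance R x y"
proof -
  have y: "(x, y) \<in> R ^^ hop_distance R x y"
    using assms(1) by (rule relpow_hop_distance)
  with assms(2) obtain t where t: "hop_distance R x y = Suc t"
    by (cases "hop_distance R x y") auto
  with y obtain z where "(x, z) \<in> R ^^ t" "(z, y) \<in> R"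
    by auto
  with t hop_distance_le[of x z] that show ?thesis
    by simp
qed

lemma admissible_graph_weight_bounds:
  assumes adm: "admissible_graph N a \<epsilon>1 \<epsilon>2" and "\<epsilon>1 \<le> \<epsilon>2" "0 < \<epsilon>1"
    and pk: "p \<le> N" "k \<le> N" "p \<noteq> k"
  shows "0 \<le> a p k" "a p k \<le> \<epsilon>2" "0 < a p k \<Longrightarrow> \<epsilon>1 \<le> a p k"
proof -
  have lap: "laplacian N a $$ (p, k) = - a p k"
    using pk by (simp add: laplacian_def)
  have "\<forall>i\<le>N. \<forall>j\<le>N. 0 \<le> a i j"
    using adm unfolding admissible_graph_def by blast
  then show nonneg: "0 \<le> a p k"
    using pk by blast
  have "laplacian N a $$ (p, k) \<noteq> 0 \<Longrightarrow>
      \<epsilon>1 \<le> \<bar>laplacian N a $$ (p, k)\<bar> \<and> \<bar>laplacian N a $$ (p, k)\<bar> \<le> \<epsilon>2"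
    using adm pk unfolding admissible_graph_def by blast
  then have "a p k \<noteq> 0 \<Longrightarrow> \<epsilon>1 \<le> a p k \<and> a p k \<le> \<epsilon>2"
    using nonneg by (simp add: lap)
  then show "a p k \<le> \<epsilon>2" "0 < a p k \<Longrightarrow> \<epsilon>1 \<le> a p k"
    using assms(2,3) by force+
qed

lemma H_of_mult_vec:
  assumes d0: "d 0 = 0" and i: "i < N"
  shows "(H_of N a *\<^sub>v vec N (\<lambda>j. d (Suc j))) $ i = (\<Sum>k\<in>{0..N} - {Suc i}. a (Suc i) k * (d (Suc i) - d k))"
proof -
  let ?p = "Suc i" and ?L = "laplacian N a"
  have "(H_of N a *\<^sub>v vec N (\<lambda>j. d (Suc j))) $ i = (\<Sum>j<N. ?L $$ (?p, Suc j) * d (Suc j))"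
    using i by (simp add: H_of_def scalar_prod_def atLeast0LessThan)
  also have "\<dots> = (\<Sum>k<Suc N. ?L $$ (?p, k) * d k)"
    by (subst sum.lessThan_Suc_shift) (simp add: d0)
  also have "\<dots> = ?L $$ (?p, ?p) * d ?p + (\<Sum>k\<in>{0..N} - {?p}. ?L $$ (?p, k) * d k)"
    using i sum.remove[of "{0..N}" ?p "\<lambda>k. ?L $$ (?p, k) * d k"]
    by (simp add: lessThan_Suc_atMost atLeast0AtMost)
  also have "\<dots> = (\<Sum>k\<in>{0..N} - {?p}. a ?p k) * d ?p - (\<Sum>k\<in>{0..N} - {?p}. a ?p k * d k)"
    using i by (auto simp: laplacian_def sum_negf[symmetric] intro!: sum.cong)
  also have "\<dots> = (\<Sum>k\<in>{0..N} - {?p}. a ?p k * (d ?p - d k))"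
    by (simp add: sum_distrib_right sum_subtractf right_diff_distrib)
  finally show ?thesis .
qed

lemma admissible_graph_reachable:
  assumes "admissible_graph N a \<epsilon>1 \<epsilon>2" and "p \<in> {1..N}"
  shows "(0, p) \<in> {(j, k). j \<le> N \<and> k \<le> N \<and> 0 < a k j}\<^sup>*"
  using assms unfolding admissible_graph_def by blast

lemma admissible_graph_no_self_loop:
  "admissible_graph N a \<epsilon>1 \<epsilon>2 \<Longrightarrow> p \<le> N \<Longrightarrow> a p p = 0"
  unfolding admissible_graph_def by blast

lemma H_of_offdiag_nonpos:
  assumes "admissible_graph N a \<epsilon>1 \<epsilon>2" "i < N" "j < N" "i \<noteq> j"
  shows "H_of N a $$ (i, j) \<le> 0"
proof -
  have "\<forall>i\<le>N. \<forall>j\<le>N. 0 \<le> a i j"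
    using assms(1) unfolding admissible_graph_def by blast
  then show ?thesis
    using assms(2-4) by (simp add: H_of_def laplacian_def)
qed

lemma sum_power_gap_lower_bound:
  fixes b \<epsilon>1 \<epsilon>2 :: real and w :: "'a \<Rightarrow> real" and h :: "'a \<Rightarrow> nat"
  assumes K: "finite K" "k0 \<in> K" "card K \<le> N"
    and b: "0 < b" "b \<le> 1" and h: "h k0 \<le> u"
    and w: "\<epsilon>1 \<le> w k0" "\<And>k. k \<in> K \<Longrightarrow> 0 \<le> w k \<and> w k \<le> \<epsilon>2" and "0 < \<epsilon>1"
  shows "\<epsilon>1 * (b ^ u - b ^ Suc u) - real N * \<epsilon>2 * b ^ Suc u \<le> (\<Sum>k\<in>K. w k * (b ^ h k - b ^ Suc u))"
proof -
  have "b ^ Suc u \<le> b ^ u" "b ^ u \<le> b ^ h k0"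
    using b h by (auto intro: power_decreasing)
  then have k0_term: "\<epsilon>1 * (b ^ u - b ^ Suc u) \<le> w k0 * (b ^ h k0 - b ^ Suc u)"
    using w(1) \<open>0 < \<epsilon>1\<close> by (intro mult_mono) auto
  have "- (\<epsilon>2 * b ^ Suc u) \<le> w k * (b ^ h k - b ^ Suc u)" if "k \<in> K - {k0}" for k
  proof -
    have "- (\<epsilon>2 * b ^ Suc u) \<le> - (w k * b ^ Suc u)"
      using w(2)[of k] that b(1) by (simp add: mult_right_mono)
    also have "\<dots> \<le> w k * (b ^ h k - b ^ Suc u)"
      using w(2)[of k] that b(1) by (simp add: algebra_simps)
    finally show ?thesis .
  qed
  then have "real (card (K - {k0})) * - (\<epsilon>2 * b ^ Suc u) \<le> (\<Sum>k\<in>K - {k0}. w k * (b ^ h k - b ^ Suc u))"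
    by (rule sum_bounded_below)
  moreover have "real (card (K - {k0})) * (\<epsilon>2 * b ^ Suc u) \<le> real N * (\<epsilon>2 * b ^ Suc u)"
    using K w(2)[of k0] b(1) \<open>0 < \<epsilon>1\<close> by (intro mult_right_mono) (auto simp: card_Diff_singleton)
  ultimately have "- (real N * \<epsilon>2 * b ^ Suc u) \<le> (\<Sum>k\<in>K - {k0}. w k * (b ^ h k - b ^ Suc u))"
    by simp
  then show ?thesis
    using k0_term K by (simp add: sum.remove)
qed

lemma hop_distance_weights_row_bound:
  fixes a :: "nat \<Rightarrow> nat \<Rightarrow> real"
  assumes adm: "admissible_graph N a \<epsilon>1 \<epsilon>2" and eps: "0 < \<epsilon>1" "\<epsilon>1 \<le> \<epsilon>2"
    and \<beta>: "0 < \<beta>" "\<beta> \<le> 1" "\<beta> * (\<epsilon>1 + real N * \<epsilon>2) \<le> \<epsilon>1 / 2"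
    and p: "p \<in> {1..N}"
    and R: "R = {(j, k). j \<le> N \<and> k \<le> N \<and> 0 < a k j}"
    and d: "d = (\<lambda>k. 1 - \<beta> ^ hop_distance R 0 k)"
  shows "\<beta> ^ ((N + 1)\<^sup>2) * \<epsilon>1 / 2 \<le> (\<Sum>k\<in>{0..N} - {p}. a p k * (d p - d k))"
proof -
  have pN: "p \<le> N"
    using p by auto
  have "(0, p) \<in> R\<^sup>*"
    unfolding R using adm p by (rule admissible_graph_reachable)
  then obtain k0 where "(k0, p) \<in> R" and k0_hop: "Suc (hop_distance R 0 k0) \<le> hop_distance R 0 p"
    using p by (auto elim: hop_distance_predecessor)
  then have k0: "k0 \<le> N" "0 < a p k0" "k0 \<noteq> p"
    using admissible_graph_no_self_loop[OF adm pN] unfolding R by auto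
  have "R \<subseteq> {..N} \<times> {..N}"
    unfolding R by auto
  then have "card R \<le> (N + 1)\<^sup>2" and "finite R"
    using card_mono[of "{..N} \<times> {..N}" R] finite_subset[of R "{..N} \<times> {..N}"]
    by (auto simp: card_cartesian_product power2_eq_square)
  then have "hop_distance R 0 p \<le> (N + 1)\<^sup>2"
    using hop_distance_le_card[of R 0 p] \<open>(0, p) \<in> R\<^sup>*\<close> by linarith
  then obtain u where u: "hop_distance R 0 p = Suc u" "hop_distance R 0 k0 \<le> u" "u \<le> (N + 1)\<^sup>2"
    using k0_hop by (cases "hop_distance R 0 p") auto
  have "\<beta> ^ ((N + 1)\<^sup>2) * \<epsilon>1 / 2 \<le> \<beta> ^ u * (\<epsilon>1 / 2)"
    using u(3) \<beta> eps by (simp add: power_decreasing mult_right_mono)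
  also have "\<dots> \<le> \<beta> ^ u * (\<epsilon>1 - \<beta> * (\<epsilon>1 + real N * \<epsilon>2))"
    using \<beta> by (intro mult_left_mono) auto
  also have "\<dots> = \<epsilon>1 * (\<beta> ^ u - \<beta> ^ Suc u) - real N * \<epsilon>2 * \<beta> ^ Suc u"
    by (simp add: algebra_simps)
  also have "\<dots> \<le> (\<Sum>k\<in>{0..N} - {p}. a p k * (\<beta> ^ hop_distance R 0 k - \<beta> ^ Suc u))"
    using k0 u(2) \<beta> eps pN admissible_graph_weight_bounds[OF adm eps(2,1) pN]
    by (intro sum_power_gap_lower_bound) (auto simp: card_Diff_singleton)
  also have "\<dots> = (\<Sum>k\<in>{0..N} - {p}. a p k * (d p - d k))"
    by (simp add: d u(1))
  finally show ?thesis .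
qed

lemma H_of_uniform_weighted_margin:
  assumes eps: "0 < \<epsilon>1" "\<epsilon>1 \<le> \<epsilon>2"
  obtains \<gamma> :: real where "0 < \<gamma>"
    and "\<And>a. admissible_graph N a \<epsilon>1 \<epsilon>2 \<Longrightarrow>
      \<exists>w. \<forall>i<N. 0 < w i \<and> w i \<le> 1 \<and> \<gamma> \<le> (H_of N a *\<^sub>v vec N w) $ i"
proof
  define \<beta> where "\<beta> = \<epsilon>1 / (2 * (\<epsilon>1 + real N * \<epsilon>2))"
  have den: "0 < \<epsilon>1 + real N * \<epsilon>2"
    using eps by (simp add: add_pos_nonneg)
  have "\<beta> < 1"
    using eps den by (simp add: \<beta>_def add_pos_nonneg)
  moreover have "\<beta> * (\<epsilon>1 + real N * \<epsilon>2) = \<epsilon>1 / 2"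
    using den by (simp add: \<beta>_def field_simps)
  ultimately have \<beta>: "0 < \<beta>" "\<beta> \<le> 1" "\<beta> * (\<epsilon>1 + real N * \<epsilon>2) \<le> \<epsilon>1 / 2"
    using eps den by (auto simp: \<beta>_def)
  show "0 < \<beta> ^ ((N + 1)\<^sup>2) * \<epsilon>1 / 2"
    using \<beta> eps by simp
  fix a assume adm: "admissible_graph N a \<epsilon>1 \<epsilon>2"
  define R where "R = {(j, k). j \<le> N \<and> k \<le> N \<and> 0 < a k j}"
  define d where "d = (\<lambda>k. 1 - \<beta> ^ hop_distance R 0 k)"
  have "d 0 = 0"
    using hop_distance_le[of 0 0 0 R] by (simp add: d_def)
  have "0 < d (Suc i) \<and> d (Suc i) \<le> 1 \<and> \<beta> ^ ((N + 1)\<^sup>2) * \<epsilon>1 / 2 \<le> (H_of N a *\<^sub>v vec N (\<lambda>j. d (Suc j))) $ i"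
    if i: "i < N" for i
  proof (intro conjI)
    have "(0, Suc i) \<in> R\<^sup>*"
      unfolding R_def using i by (intro admissible_graph_reachable[OF adm]) auto
    then obtain k where "Suc (hop_distance R 0 k) \<le> hop_distance R 0 (Suc i)"
      by (rule hop_distance_predecessor) auto
    then have "\<beta> ^ hop_distance R 0 (Suc i) \<le> \<beta> ^ 1"
      using \<beta>(1) \<open>\<beta> < 1\<close> by (intro power_decreasing) auto
    then show "0 < d (Suc i)"
      using \<open>\<beta> < 1\<close> by (simp add: d_def)
    show "d (Suc i) \<le> 1"
      using \<beta>(1) by (simp add: d_def)
    show "\<beta> ^ ((N + 1)\<^sup>2) * \<epsilon>1 / 2 \<le> (H_of N a *\<^sub>v vec N (\<lambda>j. d (Suc j))) $ i"
      unfolding H_of_mult_vec[where d = d, OF \<open>d 0 = 0\<close> i]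
      by (rule hop_distance_weights_row_bound[OF adm eps \<beta> _ R_def d_def]) (use i in simp)
  qed
  then show "\<exists>w. \<forall>i<N. 0 < w i \<and> w i \<le> 1 \<and> \<beta> ^ ((N + 1)\<^sup>2) * \<epsilon>1 / 2 \<le> (H_of N a *\<^sub>v vec N w) $ i"
    by (intro exI[of _ "\<lambda>j. d (Suc j)"]) simp
qed

lemma observer_matrix_uniformly_hurwitz:
  assumes S: "S \<in> carrier_mat q q" and eps: "0 < \<epsilon>1" "\<epsilon>1 \<le> \<epsilon>2"
  shows "\<exists>\<mu>0. \<forall>a \<mu>. admissible_graph N a \<epsilon>1 \<epsilon>2 \<and> \<mu>0 \<le> \<mu> \<longrightarrow> hurwitz (observer_matrix S (H_of N a) \<mu>)"
proof -
  obtain \<gamma> where \<gamma>: "0 < \<gamma>" and margin: "\<And>a. admissible_graph N a \<epsilon>1 \<epsilon>2 \<Longrightarrow>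
      \<exists>w. \<forall>i<N. 0 < w i \<and> w i \<le> 1 \<and> \<gamma> \<le> (H_of N a *\<^sub>v vec N w) $ i"
    using H_of_uniform_weighted_margin[OF eps] by blast
  define \<sigma> where "\<sigma> = (\<Sum>k<q. \<Sum>l<q. \<bar>S $$ (k, l)\<bar>)"
  have "hurwitz (observer_matrix S (H_of N a) \<mu>)"
    if adm: "admissible_graph N a \<epsilon>1 \<epsilon>2" and \<mu>: "(\<sigma> + 1) / \<gamma> \<le> \<mu>" for a \<mu>
  proof -
    obtain w where w: "\<forall>i<N. 0 < w i \<and> w i \<le> 1 \<and> \<gamma> \<le> (H_of N a *\<^sub>v vec N w) $ i"
      using margin[OF adm] by blast
    have "\<sigma> + 1 \<le> \<mu> * \<gamma>"
      using \<mu> \<gamma> by (simp add: pos_divide_le_eq)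
    moreover have "H_of N a \<in> carrier_mat N N"
      by (simp add: H_of_def)
    ultimately show ?thesis
      using w H_of_offdiag_nonpos[OF adm] \<gamma> S unfolding \<sigma>_def
      by (intro hurwitz_observer_matrix[where w = w and \<gamma> = \<gamma>]) auto
  qed
  then show ?thesis
    by blast
qed

lemma informative_imp_right_inverse:
  assumes dims: "\<forall>i\<in>{1..N}. E i \<in> carrier_mat (n i) q \<and> X i \<in> carrier_mat (n i) r
      \<and> U i \<in> carrier_mat (m i) r"
    and V: "V \<in> carrier_mat q r" and D: "D \<in> carrier_mat r r"
    and S: "S \<in> carrier_mat q q" and H: "H \<in> carrier_mat N N"
    and exact: "consistent N n m E X U V D Ai0 Bi0"
    and inf: "informative N n m q E X U V D S H \<mu>"
    and i: "i \<in> {1..N}"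
  shows "\<exists>Xp \<in> carrier_mat r (n i). X i * Xp = 1\<^sub>m (n i) \<and> hurwitz ((X i * D - E i * V) * Xp)"
proof -
  obtain K1 K2 where K: "\<forall>j\<in>{1..N}. K1 j \<in> carrier_mat (m j) (n j) \<and> K2 j \<in> carrier_mat (m j) q"
    and stab: "\<And>Ai Bi. consistent N n m E X U V D Ai Bi \<Longrightarrow>
      hurwitz (closed_loop (bdiag Ai N) (bdiag Bi N) (bdiag K1 N) (bdiag K2 N) S H \<mu>)"
    using inf unfolding informative_def by blast
  have Xi: "X i \<in> carrier_mat (n i) r" and Ui: "U i \<in> carrier_mat (m i) r" and Ei: "E i \<in> carrier_mat (n i) q"
    and K1i: "K1 i \<in> carrier_mat (m i) (n i)"
    using dims K i by auto
  have A0: "Ai0 i \<in> carrier_mat (n i) (n i)" and B0: "Bi0 i \<in> carrier_mat (n i) (m i)"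
    and data: "X i * D = Ai0 i * X i + Bi0 i * U i + E i * V"
    using exact i unfolding consistent_def by auto
  have robust: "hurwitz (A + B * K1 i)"
    if A: "A \<in> carrier_mat (n i) (n i)" and B: "B \<in> carrier_mat (n i) (m i)"
      and same_data: "A * X i + B * U i = Ai0 i * X i + Bi0 i * U i" for A B
  proof -
    have cons: "consistent N n m E X U V D (Ai0(i := A)) (Bi0(i := B))"
      using exact A B data same_data unfolding consistent_def by auto
    have "\<forall>j\<in>{1..N}. (Ai0(i := A)) j \<in> carrier_mat (n j) (n j) \<and> (Bi0(i := B)) j \<in> carrier_mat (n j) (m j)
        \<and> K1 j \<in> carrier_mat (m j) (n j) \<and> K2 j \<in> carrier_mat (m j) q"
      using cons K unfolding consistent_def by auto
    then have "\<forall>j\<in>{1..N}. hurwitz ((Ai0(i := A)) j + (Bi0(i := B)) j * K1 j)"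
      using stab[OF cons] hurwitz_closed_loop_iff[OF _ S H] by blast
    then show ?thesis
      using i by force
  qed
  obtain Xp where Xp: "Xp \<in> carrier_mat r (n i)" "X i * Xp = 1\<^sub>m (n i)" "U i * Xp = K1 i"
    using robust_stabilizing_gain_factors_through_data[OF Xi Ui K1i A0 B0 robust] by blast
  have "(X i * D - E i * V) * Xp = Ai0 i + Bi0 i * K1 i"
    using right_inverse_closed_loop[OF Xi Ui A0 B0 Ei V D Xp(1) data Xp(2)] Xp(3) by simp
  then show ?thesis
    using robust[OF A0 B0 refl] Xp(1,2) by auto
qed

lemma right_inverse_imp_informative:
  assumes dims: "\<forall>i\<in>{1..N}. E i \<in> carrier_mat (n i) q \<and> X i \<in> carrier_mat (n i) r
      \<and> U i \<in> carrier_mat (m i) r"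
    and V: "V \<in> carrier_mat q r" and D: "D \<in> carrier_mat r r"
    and S: "S \<in> carrier_mat q q" and H: "H \<in> carrier_mat N N"
    and observer: "hurwitz (observer_matrix S H \<mu>)"
    and right_inv: "\<forall>i\<in>{1..N}. \<exists>Xp \<in> carrier_mat r (n i).
      X i * Xp = 1\<^sub>m (n i) \<and> hurwitz ((X i * D - E i * V) * Xp)"
  shows "informative N n m q E X U V D S H \<mu>"
proof -
  obtain Xp where Xp: "\<And>i. i \<in> {1..N} \<Longrightarrow> Xp i \<in> carrier_mat r (n i) \<and> X i * Xp i = 1\<^sub>m (n i)
      \<and> hurwitz ((X i * D - E i * V) * Xp i)"
    using right_inv by metis
  define K1 where "K1 i = U i * Xp i" for i
  define K2 where "K2 i = (0\<^sub>m (m i) q :: real mat)" for i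
  have K: "\<forall>i\<in>{1..N}. K1 i \<in> carrier_mat (m i) (n i) \<and> K2 i \<in> carrier_mat (m i) q"
    using dims Xp by (fastforce simp: K1_def K2_def)
  have "hurwitz (closed_loop (bdiag Ai N) (bdiag Bi N) (bdiag K1 N) (bdiag K2 N) S H \<mu>)"
    if cons: "consistent N n m E X U V D Ai Bi" for Ai Bi
  proof -
    have carriers: "\<forall>j\<in>{1..N}. Ai j \<in> carrier_mat (n j) (n j) \<and> Bi j \<in> carrier_mat (n j) (m j)
        \<and> K1 j \<in> carrier_mat (m j) (n j) \<and> K2 j \<in> carrier_mat (m j) q"
      using cons K unfolding consistent_def by auto
    have "hurwitz (Ai j + Bi j * K1 j)" if j: "j \<in> {1..N}" for j
    proof -
      have "(X j * D - E j * V) * Xp j = Ai j + Bi j * K1 j"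
        unfolding K1_def using dims cons Xp[OF j] j unfolding consistent_def
        by (intro right_inverse_closed_loop[OF _ _ _ _ _ V D]) auto
      then show ?thesis
        using Xp[OF j] by simp
    qed
    then show ?thesis
      using observer hurwitz_closed_loop_iff[OF carriers S H] by blast
  qed
  then show ?thesis
    unfolding informative_def using K by blast
qed

theorem theorem1:
  fixes N q d :: nat and n m :: "nat \<Rightarrow> nat"
    and E X U :: "nat \<Rightarrow> real mat" and V D S :: "real mat" and \<epsilon>1 \<epsilon>2 :: real
  assumes dims: "\<forall>i\<in>{1..N}. E i \<in> carrier_mat (n i) q \<and> X i \<in> carrier_mat (n i) (Suc d)
                   \<and> U i \<in> carrier_mat (m i) (Suc d)"
    and V: "V \<in> carrier_mat q (Suc d)"
    and D: "D \<in> carrier_mat (Suc d) (Suc d)"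
    and S: "S \<in> carrier_mat q q"
    and S_eig: "\<forall>z. eigenvalue (map_mat complex_of_real S) z \<longrightarrow> 0 \<le> Re z"
    and exact: "\<exists>Ai Bi. consistent N n m E X U V D Ai Bi"
    and eps: "0 < \<epsilon>1" "\<epsilon>1 \<le> \<epsilon>2"
  shows "\<exists>\<mu>0. \<forall>a \<mu>. admissible_graph N a \<epsilon>1 \<epsilon>2 \<and> \<mu>0 \<le> \<mu> \<longrightarrow>
           (informative N n m q E X U V D S (H_of N a) \<mu> \<longleftrightarrow>
            (\<forall>i\<in>{1..N}. \<exists>Xp \<in> carrier_mat (Suc d) (n i).
               X i * Xp = 1\<^sub>m (n i) \<and> hurwitz ((X i * D - E i * V) * Xp)))"
proof -
  obtain \<mu>0 where observer: "\<And>a \<mu>. admissible_graph N a \<epsilon>1 \<epsilon>2 \<Longrightarrow> \<mu>0 \<le> \<mu> \<Longrightarrow>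
      hurwitz (observer_matrix S (H_of N a) \<mu>)"
    using observer_matrix_uniformly_hurwitz[OF S eps] by blast
  obtain Ai0 Bi0 where cons: "consistent N n m E X U V D Ai0 Bi0"
    using exact by blast
  have H: "H_of N a \<in> carrier_mat N N" for a
    by (simp add: H_of_def)
  show ?thesis
  proof (intro exI allI impI iffI ballI; elim conjE)
    fix a \<mu> i
    assume "informative N n m q E X U V D S (H_of N a) \<mu>" and "i \<in> {1..N}"
    then show "\<exists>Xp \<in> carrier_mat (Suc d) (n i). X i * Xp = 1\<^sub>m (n i) \<and> hurwitz ((X i * D - E i * V) * Xp)"
      by (rule informative_imp_right_inverse[OF dims V D S H cons])
  next
    fix a \<mu>
    assume "admissible_graph N a \<epsilon>1 \<epsilon>2" "\<mu>0 \<le> \<mu>"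
      and "\<forall>i\<in>{1..N}. \<exists>Xp \<in> carrier_mat (Suc d) (n i). X i * Xp = 1\<^sub>m (n i) \<and> hurwitz ((X i * D - E i * V) * Xp)"
    then show "informative N n m q E X U V D S (H_of N a) \<mu>"
      using observer by (intro right_inverse_imp_informative[OF dims V D S H]) auto
  qed
qed

end
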